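(* Let $G=(V,E,w)$ be an undirected graph without self-loops, with $n\ge 2$ vertices, positive edge weights and conductance $\Phi_G>0$. Then every HC tree $\mathcal{T}$ of $G$ satisfies \[ \mathrm{cost}_G(\mathcal{T}) \le \frac{9}{4\Phi_G}\cdot \min\left\{\frac{d_{\mathrm{avg}}}{d_{\min}},\frac{d_{\max}}{d_{\mathrm{avg}}}\right\}\cdot \mathsf{OPT}_G. \]
   Context: $d_u=\sum_{v} w_{uv}$; $d_{\min},d_{\max}$ are the minimum and maximum degree, $d_{\mathrm{avg}}=\sum_u d_u/n$. $\mathrm{vol}(S)=\sum_{u\in S}d_u$. Conductance of nonempty $S$: $\Phi_G(S)=w(S,V\setminus S)/\mathrm{vol}(S)$ where $w(S,T)$ is the total weight of edges between $S$ and $T$; $\Phi_G=\min\{\Phi_G(S):\emptyset\ne S\subset V,\ \mathrm{vol}(S)\le\mathrm{vol}(V)/2\}$. An HC tree is a rooted binary tree whose leaves are in bijection with $V$; $u\vee v$ is the lowest common ancestor; $\mathrm{cost}_G(\mathcal{T})=\sum_{\{u,v\}\in E}w_{uv}|\mathsf{leaves}(\mathcal{T}[u\vee v])|$; $\mathsf{OPT}_G=\min_{\mathcal{T}}\mathrm{cost}_G(\mathcal{T})$. *)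

theory Defs
  imports Main "HOL-Library.Multiset" Complex_Main
begin

text \<open>Weighted undirected graph: finite vertex set V, symmetric weight function
  w :: 'a => 'a => real; an edge {u,v} is present iff w u v > 0.\<close>

definition wgraph :: "'a set \<Rightarrow> ('a \<Rightarrow> 'a \<Rightarrow> real) \<Rightarrow> bool" where
  "wgraph V w \<longleftrightarrow> finite V \<and> (\<forall>u v. w u v = w v u) \<and> (\<forall>u v. w u v \<ge> 0)
     \<and> (\<forall>u v. w u v \<noteq> 0 \<longrightarrow> u \<in> V \<and> v \<in> V)"

definition no_self_loops :: "('a \<Rightarrow> 'a \<Rightarrow> real) \<Rightarrow> bool" where
  "no_self_loops w \<longleftrightarrow> (\<forall>u. w u u = 0)"

definition degree :: "'a set \<Rightarrow> ('a \<Rightarrow> 'a \<Rightarrow> real) \<Rightarrow> 'a \<Rightarrow> real" where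
  "degree V w u = (\<Sum>v\<in>V. w u v)"

definition dmin :: "'a set \<Rightarrow> ('a \<Rightarrow> 'a \<Rightarrow> real) \<Rightarrow> real" where
  "dmin V w = Min (degree V w ` V)"

definition dmax :: "'a set \<Rightarrow> ('a \<Rightarrow> 'a \<Rightarrow> real) \<Rightarrow> real" where
  "dmax V w = Max (degree V w ` V)"

definition davg :: "'a set \<Rightarrow> ('a \<Rightarrow> 'a \<Rightarrow> real) \<Rightarrow> real" where
  "davg V w = (\<Sum>u\<in>V. degree V w u) / real (card V)"

definition vol :: "'a set \<Rightarrow> ('a \<Rightarrow> 'a \<Rightarrow> real) \<Rightarrow> 'a set \<Rightarrow> real" where
  "vol V w S = (\<Sum>u\<in>S. degree V w u)"

definition cut_weight :: "('a \<Rightarrow> 'a \<Rightarrow> real) \<Rightarrow> 'a set \<Rightarrow> 'a set \<Rightarrow> real" where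
  "cut_weight w S T = (\<Sum>u\<in>S. \<Sum>v\<in>T. w u v)"

definition set_conductance :: "'a set \<Rightarrow> ('a \<Rightarrow> 'a \<Rightarrow> real) \<Rightarrow> 'a set \<Rightarrow> real" where
  "set_conductance V w S = cut_weight w S (V - S) / vol V w S"

definition conductance :: "'a set \<Rightarrow> ('a \<Rightarrow> 'a \<Rightarrow> real) \<Rightarrow> real" where
  "conductance V w = Min {set_conductance V w S | S.
      S \<noteq> {} \<and> S \<subset> V \<and> vol V w S \<le> vol V w V / 2}"

datatype 'a bintree = Leaf 'a | Node "'a bintree" "'a bintree"

fun leaves :: "'a bintree \<Rightarrow> 'a multiset" where
  "leaves (Leaf x) = {#x#}"
| "leaves (Node l r) = leaves l + leaves r"

definition hc_tree :: "'a set \<Rightarrow> 'a bintree \<Rightarrow> bool" where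
  "hc_tree V T \<longleftrightarrow> set_mset (leaves T) = V \<and> (\<forall>x. count (leaves T) x \<le> 1)"

text \<open>Number of leaves of the subtree rooted at the lowest common ancestor of u and v.\<close>
fun lca_size :: "'a bintree \<Rightarrow> 'a \<Rightarrow> 'a \<Rightarrow> nat" where
  "lca_size (Leaf x) u v = 1"
| "lca_size (Node l r) u v =
     (if u \<in># leaves l \<and> v \<in># leaves l then lca_size l u v
      else if u \<in># leaves r \<and> v \<in># leaves r then lca_size r u v
      else size (leaves (Node l r)))"

text \<open>cost_G(T) = sum over edges {u,v} of w_uv |leaves(T[u \<or> v])|; each unordered
  pair is counted twice in the ordered double sum, hence the factor 1/2.\<close>
definition hc_cost :: "'a set \<Rightarrow> ('a \<Rightarrow> 'a \<Rightarrow> real) \<Rightarrow> 'a bintree \<Rightarrow> real" where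
  "hc_cost V w T = (\<Sum>u\<in>V. \<Sum>v\<in>V. if u \<noteq> v then w u v * real (lca_size T u v) else 0) / 2"

definition hc_opt :: "'a set \<Rightarrow> ('a \<Rightarrow> 'a \<Rightarrow> real) \<Rightarrow> real" where
  "hc_opt V w = Inf {hc_cost V w T | T. hc_tree V T}"

end

theory Submission
  imports Defs
begin

text \<open>
  Every edge is charged at most n times its weight, so any HC tree costs at most
  n vol(V) / 2 = n^2 d_avg / 2.  For the lower bound on OPT, walk down an arbitrary HC tree
  towards the heavier child, with respect to a vertex weight f (either 1 or the degree), until
  reaching a node Q of weight above 2/3 of the total with a child S of weight at most 2/3 of the
  total and at least half that of Q.  Both S and V - S then carry at least 1/3 of the total
  weight, so w(S, V - S) \<ge> \<Phi> min(vol S, vol (V - S)) is large, and every edge leaving S is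
  charged at least |Q|.  With f = 1 this gives OPT \<ge> 2/9 \<Phi> d_min n^2, with f = degree it
  gives OPT \<ge> 2/9 \<Phi> vol(V)^2 / d_max.
\<close>

lemma mset_set_set_mset_eq:
  assumes "\<forall>x. count M x \<le> 1"
  shows "mset_set (set_mset M) = M"
proof (rule multiset_eqI)
  fix x
  have "x \<in># M \<Longrightarrow> 0 < count M x"
    by simp
  then have "x \<in># M \<Longrightarrow> count M x = 1"
    using assms[rule_format, of x] by linarith
  then show "count (mset_set (set_mset M)) x = count M x"
    by (cases "x \<in># M") (auto simp: not_in_iff)
qed

lemma sum_mset_image_eq_sum_set_mset:
  "\<forall>x. count M x \<le> 1 \<Longrightarrow> sum_mset (image_mset f M) = sum f (set_mset M)"
  by (metis mset_set_set_mset_eq sum_unfold_sum_mset)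

lemma size_eq_card_set_mset:
  "\<forall>x. count M x \<le> 1 \<Longrightarrow> size M = card (set_mset M)"
  by (metis mset_set_set_mset_eq size_mset_set)

fun subtrees :: "'a bintree \<Rightarrow> 'a bintree set" where
  "subtrees (Leaf x) = {Leaf x}"
| "subtrees (Node l r) = insert (Node l r) (subtrees l \<union> subtrees r)"

lemma subtrees_refl [simp]: "t \<in> subtrees t"
  by (cases t) auto

lemma children_in_subtrees: "Node l r \<in> subtrees t \<Longrightarrow> l \<in> subtrees t \<and> r \<in> subtrees t"
  by (induction t) auto

lemma leaves_subtree: "P \<in> subtrees t \<Longrightarrow> leaves P \<subseteq># leaves t"
  by (induction t) (auto intro: subset_mset.order_trans)

lemma count_leaves_subtree_le_1:
  "P \<in> subtrees t \<Longrightarrow> \<forall>x. count (leaves t) x \<le> 1 \<Longrightarrow> \<forall>x. count (leaves P) x \<le> 1"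
  by (meson leaves_subtree mset_subset_eq_count order_trans)

lemma lca_size_commute: "lca_size t u v = lca_size t v u"
  by (induction t) auto

lemma lca_size_le_size_leaves: "lca_size t u v \<le> size (leaves t)"
  by (induction t) auto

lemma lca_size_ge_if_separated:
  assumes "Node l r \<in> subtrees t" "\<forall>x. count (leaves t) x \<le> 1"
    and "C \<in> {l, r}" "u \<in># leaves C" "v \<notin># leaves C"
  shows "size (leaves (Node l r)) \<le> lca_size t u v"
  using assms
proof (induction t)
  case (Leaf x)
  then show ?case by simp
next
  case (Node l' r')
  have disjoint: "x \<notin># leaves r'" if "x \<in># leaves l'" for x
  proof -
    have "count (leaves l') x + count (leaves r') x \<le> 1"
      using Node.prems(2) by (metis count_union leaves.simps(2))
    moreover have "0 < count (leaves l') x"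
      using that by simp
    ultimately have "count (leaves r') x = 0" by linarith
    then show ?thesis by (simp add: not_in_iff)
  qed
  have u: "u \<in># leaves (Node l r)"
    using Node.prems(3,4) by auto
  have parent: "size (leaves (Node l r)) \<le> size (leaves (Node l' r'))"
    using size_mset_mono[OF leaves_subtree[OF Node.prems(1)]] .
  from Node.prems(1) consider "Node l r = Node l' r'" | "Node l r \<in> subtrees l'" | "Node l r \<in> subtrees r'"
    by auto
  then show ?case
  proof cases
    case 1
    then show ?thesis using Node.prems(3-5) disjoint by auto
  next
    case 2
    have "u \<in># leaves l'"
      using leaves_subtree[OF 2] u by (meson mset_subset_eqD)
    moreover have "\<forall>x. count (leaves l') x \<le> 1"
      using Node.prems(2) by (simp, metis add_leE)
    ultimately show ?thesis
      using Node.IH(1)[OF 2 _ Node.prems(3-5)] parent disjoint by auto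
  next
    case 3
    have "u \<in># leaves r'"
      using leaves_subtree[OF 3] u by (meson mset_subset_eqD)
    moreover have "\<forall>x. count (leaves r') x \<le> 1"
      using Node.prems(2) by (simp, metis add_leE)
    ultimately show ?thesis
      using Node.IH(2)[OF 3 _ Node.prems(3-5)] parent disjoint by auto
  qed
qed

definition leaf_weight :: "('a \<Rightarrow> real) \<Rightarrow> 'a bintree \<Rightarrow> real" where
  "leaf_weight f t = sum_mset (image_mset f (leaves t))"

lemma leaf_weight_Node [simp]: "leaf_weight f (Node l r) = leaf_weight f l + leaf_weight f r"
  by (simp add: leaf_weight_def)

lemma heavy_node_with_light_child:
  assumes "\<forall>x\<in>#leaves t. f x \<le> c" "c < leaf_weight f t"
  shows "\<exists>l r C. Node l r \<in> subtrees t \<and> C \<in> {l, r} \<and> leaf_weight f C \<le> c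
           \<and> c < leaf_weight f (Node l r) \<and> leaf_weight f (Node l r) \<le> 2 * leaf_weight f C"
  using assms
proof (induction t)
  case (Leaf x)
  then show ?case by (simp add: leaf_weight_def)
next
  case (Node l r)
  show ?case
  proof (cases "leaf_weight f l \<le> c \<and> leaf_weight f r \<le> c")
    case both_light: True
    show ?thesis
    proof (cases "leaf_weight f r \<le> leaf_weight f l")
      case True
      then show ?thesis
        using both_light Node.prems(2) by (intro exI[of _ l] exI[of _ r] exI[of _ l]) auto
    next
      case False
      then show ?thesis
        using both_light Node.prems(2) by (intro exI[of _ l] exI[of _ r] exI[of _ r]) auto
    qed
  next
    case False
    then consider "c < leaf_weight f l" | "c < leaf_weight f r" by linarith
    then show ?thesis
    proof cases
      case 1
      then show ?thesis using Node.IH(1) Node.prems(1) by force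
    next
      case 2
      then show ?thesis using Node.IH(2) Node.prems(1) by force
    qed
  qed
qed

lemma hc_tree_cluster_split:
  fixes f :: "'a \<Rightarrow> real"
  assumes "hc_tree V t" "\<forall>x\<in>V. f x \<le> c" "c < sum f V"
  shows "\<exists>S Q. S \<subseteq> Q \<and> Q \<subseteq> V \<and> sum f S \<le> c \<and> c < sum f Q \<and> sum f Q \<le> 2 * sum f S
           \<and> (\<forall>u\<in>S. \<forall>v. v \<notin> S \<longrightarrow> card Q \<le> lca_size t u v)"
proof -
  have distinct: "\<forall>x. count (leaves t) x \<le> 1" and V: "set_mset (leaves t) = V"
    using assms(1) by (auto simp: hc_tree_def)
  have weight_eq_sum: "leaf_weight f P = sum f (set_mset (leaves P))" if "P \<in> subtrees t" for P
    using sum_mset_image_eq_sum_set_mset[OF count_leaves_subtree_le_1[OF that distinct]]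
    by (simp add: leaf_weight_def)
  obtain l r C where lrC: "Node l r \<in> subtrees t" "C \<in> {l, r}" "leaf_weight f C \<le> c"
      "c < leaf_weight f (Node l r)" "leaf_weight f (Node l r) \<le> 2 * leaf_weight f C"
    using heavy_node_with_light_child[of t f c] assms(2,3) V weight_eq_sum by auto
  have "C \<in> subtrees t"
    using lrC(2) children_in_subtrees[OF lrC(1)] by auto
  define S where "S = set_mset (leaves C)"
  define Q where "Q = set_mset (leaves (Node l r))"
  have "card Q = size (leaves (Node l r))"
    using size_eq_card_set_mset[OF count_leaves_subtree_le_1[OF lrC(1) distinct]] by (simp add: Q_def)
  then have "\<forall>u\<in>S. \<forall>v. v \<notin> S \<longrightarrow> card Q \<le> lca_size t u v"
    using lca_size_ge_if_separated[OF lrC(1) distinct lrC(2)] by (simp add: S_def)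
  moreover have "S \<subseteq> Q" "Q \<subseteq> V"
    using lrC(2) V set_mset_mono[OF leaves_subtree[OF lrC(1)]] by (auto simp: S_def Q_def)
  moreover have "sum f S \<le> c" "c < sum f Q" "sum f Q \<le> 2 * sum f S"
    using lrC(3-5) weight_eq_sum[OF lrC(1)] weight_eq_sum[OF \<open>C \<in> subtrees t\<close>]
    by (simp_all add: S_def Q_def)
  ultimately show ?thesis
    by blast
qed

lemma degree_nonneg: "wgraph V w \<Longrightarrow> 0 \<le> degree V w u"
  unfolding degree_def wgraph_def by (simp add: sum_nonneg)

lemma vol_nonneg: "wgraph V w \<Longrightarrow> 0 \<le> vol V w S"
  unfolding vol_def by (simp add: degree_nonneg sum_nonneg)

lemma cut_weight_nonneg: "wgraph V w \<Longrightarrow> 0 \<le> cut_weight w S T"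
  unfolding cut_weight_def wgraph_def by (simp add: sum_nonneg)

lemma cut_weight_commute: "wgraph V w \<Longrightarrow> cut_weight w S T = cut_weight w T S"
  unfolding cut_weight_def wgraph_def by (subst sum.swap) simp

lemma vol_split: "wgraph V w \<Longrightarrow> S \<subseteq> V \<Longrightarrow> vol V w V = vol V w S + vol V w (V - S)"
  unfolding vol_def wgraph_def by (simp add: sum.subset_diff)

lemma degree_le_half_vol:
  assumes "wgraph V w" "no_self_loops w" "u \<in> V"
  shows "2 * degree V w u \<le> vol V w V"
proof -
  have fin: "finite V"
    using assms(1) by (simp add: wgraph_def)
  have "degree V w u = (\<Sum>v\<in>V - {u}. w v u)"
    using assms unfolding degree_def wgraph_def no_self_loops_def by (simp add: sum.remove)
  also have "\<dots> \<le> (\<Sum>v\<in>V - {u}. degree V w v)"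
    using assms(1,3) fin unfolding degree_def wgraph_def
    by (intro sum_mono member_le_sum) auto
  also have "\<dots> = vol V w V - degree V w u"
    unfolding vol_def using sum.remove[OF fin assms(3), of "degree V w"] by linarith
  finally show ?thesis by simp
qed

lemma conductance_le_set_conductance:
  assumes "wgraph V w" "S \<noteq> {}" "S \<subset> V" "vol V w S \<le> vol V w V / 2"
  shows "conductance V w \<le> set_conductance V w S"
proof -
  have "{set_conductance V w S | S. S \<noteq> {} \<and> S \<subset> V \<and> vol V w S \<le> vol V w V / 2}
          \<subseteq> set_conductance V w ` Pow V"
    by auto
  then have "finite {set_conductance V w S | S. S \<noteq> {} \<and> S \<subset> V \<and> vol V w S \<le> vol V w V / 2}"
    using assms(1) unfolding wgraph_def by (meson finite_Pow_iff finite_imageI finite_subset)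
  then show ?thesis
    unfolding conductance_def using assms(2-4) by (intro Min_le) auto
qed

lemma conductance_mult_vol_le_cut_weight:
  assumes "wgraph V w" "0 < conductance V w" "S \<noteq> {}" "S \<subset> V" "vol V w S \<le> vol V w V / 2"
  shows "0 < vol V w S" and "conductance V w * vol V w S \<le> cut_weight w S (V - S)"
proof -
  have le: "conductance V w \<le> set_conductance V w S"
    using conductance_le_set_conductance[OF assms(1,3-5)] .
  \<comment> \<open>a set of zero volume has set conductance 0, by the convention x / 0 = 0\<close>
  show pos: "0 < vol V w S"
    using le assms(2) vol_nonneg[OF assms(1), of S]
    by (cases "vol V w S = 0") (auto simp: set_conductance_def)
  show "conductance V w * vol V w S \<le> cut_weight w S (V - S)"
    using mult_right_mono[OF le less_imp_le[OF pos]] pos by (simp add: set_conductance_def)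
qed

lemma conductance_mult_min_vol_le_cut_weight:
  assumes "wgraph V w" "0 < conductance V w" "S \<noteq> {}" "S \<subset> V"
  shows "conductance V w * min (vol V w S) (vol V w (V - S)) \<le> cut_weight w S (V - S)"
proof (cases "vol V w S \<le> vol V w V / 2")
  case True
  have "conductance V w * min (vol V w S) (vol V w (V - S)) \<le> conductance V w * vol V w S"
    using assms(2) by (intro mult_left_mono) auto
  then show ?thesis
    using conductance_mult_vol_le_cut_weight(2)[OF assms True] by linarith
next
  case False
  have "V - S \<noteq> {}" "V - S \<subset> V" "V - (V - S) = S"
    using assms(3,4) by auto
  moreover have "vol V w (V - S) \<le> vol V w V / 2"
    using False vol_split[OF assms(1)] assms(4) by fastforce
  ultimately have "conductance V w * vol V w (V - S) \<le> cut_weight w S (V - S)"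
    using conductance_mult_vol_le_cut_weight(2)[OF assms(1,2), of "V - S"]
      cut_weight_commute[OF assms(1)] by metis
  moreover have "conductance V w * min (vol V w S) (vol V w (V - S)) \<le> conductance V w * vol V w (V - S)"
    using assms(2) by (intro mult_left_mono) auto
  ultimately show ?thesis
    by linarith
qed

lemma hc_cost_ge_cut_weight:
  assumes "wgraph V w" "S \<subseteq> V" "\<forall>u\<in>S. \<forall>v. v \<notin> S \<longrightarrow> m \<le> lca_size t u v"
  shows "real m * cut_weight w S (V - S) \<le> hc_cost V w t"
proof -
  have fin: "finite V" and w: "\<And>u v. 0 \<le> w u v"
    using assms(1) by (auto simp: wgraph_def)
  define c where "c u v = (if u \<noteq> v then w u v * real (lca_size t u v) else 0)" for u v
  have row: "(\<Sum>v\<in>T. w u v) * real m \<le> (\<Sum>v\<in>V. c u v)"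
    if "T \<subseteq> V" "\<forall>v\<in>T. u \<noteq> v \<and> m \<le> lca_size t u v" for u T
  proof -
    have "(\<Sum>v\<in>T. w u v) * real m \<le> (\<Sum>v\<in>T. c u v)"
      unfolding sum_distrib_right c_def using that(2) w by (intro sum_mono) (simp add: mult_left_mono)
    also have "\<dots> \<le> (\<Sum>v\<in>V. c u v)"
      using fin that(1) w by (intro sum_mono2) (auto simp: c_def)
    finally show ?thesis .
  qed
  have "2 * (real m * cut_weight w S (V - S))
          = cut_weight w S (V - S) * real m + cut_weight w (V - S) S * real m"
    using cut_weight_commute[OF assms(1), of S "V - S"] by simp
  also have "\<dots> = (\<Sum>u\<in>S. (\<Sum>v\<in>V - S. w u v) * real m) + (\<Sum>u\<in>V - S. (\<Sum>v\<in>S. w u v) * real m)"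
    by (simp add: cut_weight_def sum_distrib_right)
  also have "\<dots> \<le> (\<Sum>u\<in>S. \<Sum>v\<in>V. c u v) + (\<Sum>u\<in>V - S. \<Sum>v\<in>V. c u v)"
    using assms(2,3) lca_size_commute[of t] by (intro add_mono sum_mono row) (auto, metis)
  also have "\<dots> = 2 * hc_cost V w t"
    unfolding hc_cost_def using sum.subset_diff[OF assms(2) fin, of "\<lambda>u. \<Sum>v\<in>V. c u v"]
    by (simp add: c_def)
  finally show ?thesis by simp
qed

lemma hc_cost_le_card_mult_vol:
  assumes "wgraph V w" "hc_tree V t"
  shows "hc_cost V w t \<le> real (card V) * vol V w V / 2"
proof -
  have "size (leaves t) = card V"
    using assms(2) size_eq_card_set_mset by (auto simp: hc_tree_def)
  then have "(if u \<noteq> v then w u v * real (lca_size t u v) else 0) \<le> w u v * real (card V)" for u v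
    using assms(1) lca_size_le_size_leaves[of t u v] by (auto simp: wgraph_def mult_left_mono)
  then have "(\<Sum>u\<in>V. \<Sum>v\<in>V. if u \<noteq> v then w u v * real (lca_size t u v) else 0)
               \<le> (\<Sum>u\<in>V. \<Sum>v\<in>V. w u v * real (card V))"
    by (intro sum_mono)
  also have "\<dots> = real (card V) * vol V w V"
    by (simp add: vol_def degree_def sum_distrib_right sum_distrib_left mult.commute)
  finally show ?thesis
    unfolding hc_cost_def by simp
qed

lemma hc_cost_ge_balanced_cut:
  assumes "wgraph V w" "0 < conductance V w" "S \<subseteq> V"
    and "a \<le> vol V w S" "a \<le> vol V w (V - S)"
    and "\<forall>u\<in>S. \<forall>v. v \<notin> S \<longrightarrow> m \<le> lca_size t u v"
  shows "real m * (conductance V w * a) \<le> hc_cost V w t"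
proof -
  have "conductance V w * a \<le> cut_weight w S (V - S)"
  proof (cases "a \<le> 0")
    case True
    then show ?thesis
      using mult_nonneg_nonpos[of "conductance V w" a] assms(2) cut_weight_nonneg[OF assms(1), of S "V - S"]
      by linarith
  next
    case False
    then have "S \<noteq> {}" "S \<subset> V"
      using assms(3-5) by (auto simp: vol_def)
    then have "conductance V w * min (vol V w S) (vol V w (V - S)) \<le> cut_weight w S (V - S)"
      using conductance_mult_min_vol_le_cut_weight[OF assms(1,2)] by blast
    moreover have "conductance V w * a \<le> conductance V w * min (vol V w S) (vol V w (V - S))"
      using assms(2,4,5) by simp
    ultimately show ?thesis by linarith
  qed
  then have "real m * (conductance V w * a) \<le> real m * cut_weight w S (V - S)"
    by (simp add: mult_left_mono)
  also have "\<dots> \<le> hc_cost V w t"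
    using hc_cost_ge_cut_weight[OF assms(1,3,6)] .
  finally show ?thesis .
qed

lemma hc_cost_ge_dmin_bound:
  assumes "wgraph V w" "0 < conductance V w" "hc_tree V t" "2 \<le> card V"
    and "\<forall>u\<in>V. dm \<le> degree V w u" "0 \<le> dm"
  shows "2/9 * conductance V w * dm * real (card V)^2 \<le> hc_cost V w t"
proof -
  let ?n = "real (card V)"
  have fin: "finite V"
    using assms(1) by (simp add: wgraph_def)
  obtain S Q where SQ: "S \<subseteq> Q" "Q \<subseteq> V" "real (card S) \<le> 2 * ?n / 3"
      "2 * ?n / 3 < real (card Q)" "real (card Q) \<le> 2 * real (card S)"
      "\<forall>u\<in>S. \<forall>v. v \<notin> S \<longrightarrow> card Q \<le> lca_size t u v"
    using hc_tree_cluster_split[OF assms(3), of "\<lambda>_. 1" "2 * ?n / 3"] assms(4) by auto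
  have SV: "S \<subseteq> V"
    using SQ(1,2) by simp
  have vol_ge_card: "real (card A) * dm \<le> vol V w A" if "A \<subseteq> V" for A
    unfolding vol_def using that assms(5) sum_bounded_below[of A dm "degree V w"] by auto
  have "real (card (V - S)) = ?n - real (card S)"
    using SV fin by (simp add: card_Diff_subset finite_subset card_mono of_nat_diff)
  then have "?n / 3 \<le> real (card S)" "?n / 3 \<le> real (card (V - S))"
    using SQ(3-5) by linarith+
  then have "?n / 3 * dm \<le> vol V w S" "?n / 3 * dm \<le> vol V w (V - S)"
    using vol_ge_card[OF SV] vol_ge_card[of "V - S"] mult_right_mono[OF _ assms(6)]
    by (meson Diff_subset order_trans)+
  then have "real (card Q) * (conductance V w * (?n / 3 * dm)) \<le> hc_cost V w t"
    using hc_cost_ge_balanced_cut[OF assms(1,2) SV _ _ SQ(6)] by blast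
  moreover have "2 * ?n / 3 * (conductance V w * (?n / 3 * dm))
                   \<le> real (card Q) * (conductance V w * (?n / 3 * dm))"
    using SQ(4) assms(2,6) by (intro mult_right_mono) auto
  ultimately show ?thesis
    by (simp add: power2_eq_square algebra_simps)
qed

lemma hc_cost_ge_dmax_bound:
  assumes "wgraph V w" "no_self_loops w" "0 < conductance V w" "hc_tree V t"
    and "\<forall>u\<in>V. degree V w u \<le> dM" "0 < dM" "0 < vol V w V"
  shows "2/9 * conductance V w * (vol V w V)^2 / dM \<le> hc_cost V w t"
proof -
  let ?D = "vol V w V"
  obtain S Q where SQ: "S \<subseteq> Q" "Q \<subseteq> V" "vol V w S \<le> 2 * ?D / 3"
      "2 * ?D / 3 < vol V w Q" "vol V w Q \<le> 2 * vol V w S"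
      "\<forall>u\<in>S. \<forall>v. v \<notin> S \<longrightarrow> card Q \<le> lca_size t u v"
    using hc_tree_cluster_split[OF assms(4), of "degree V w" "2 * ?D / 3"] assms(7)
      degree_le_half_vol[OF assms(1,2)] unfolding vol_def by fastforce
  have SV: "S \<subseteq> V"
    using SQ(1,2) by simp
  have "?D / 3 \<le> vol V w S" "?D / 3 \<le> vol V w (V - S)"
    using SQ(3-5) vol_split[OF assms(1) SV] by linarith+
  then have "real (card Q) * (conductance V w * (?D / 3)) \<le> hc_cost V w t"
    using hc_cost_ge_balanced_cut[OF assms(1,3) SV _ _ SQ(6)] by blast
  moreover have "vol V w Q \<le> real (card Q) * dM"
    using SQ(2) assms(5) sum_bounded_above[of Q "degree V w" dM] unfolding vol_def by auto
  then have "2 * ?D / 3 < real (card Q) * dM"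
    using SQ(4) by linarith
  then have "2 * ?D / 3 / dM * (conductance V w * (?D / 3))
               \<le> real (card Q) * (conductance V w * (?D / 3))"
    using assms(3,6,7) by (intro mult_right_mono) (auto simp: divide_le_eq)
  ultimately show ?thesis
    by (simp add: power2_eq_square algebra_simps)
qed

lemma hc_opt_greatest:
  "hc_tree V t \<Longrightarrow> (\<And>t. hc_tree V t \<Longrightarrow> L \<le> hc_cost V w t) \<Longrightarrow> L \<le> hc_opt V w"
  unfolding hc_opt_def by (rule cInf_greatest) auto

lemma dmin_le_degree: "finite V \<Longrightarrow> u \<in> V \<Longrightarrow> dmin V w \<le> degree V w u"
  unfolding dmin_def by simp

lemma degree_le_dmax: "finite V \<Longrightarrow> u \<in> V \<Longrightarrow> degree V w u \<le> dmax V w"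
  unfolding dmax_def by simp

lemma card_mult_dmin_le_vol: "finite V \<Longrightarrow> real (card V) * dmin V w \<le> vol V w V"
  unfolding vol_def using sum_bounded_below[OF dmin_le_degree] by simp

lemma davg_nonneg: "wgraph V w \<Longrightarrow> 0 \<le> davg V w"
  using vol_nonneg[of V w V] by (simp add: davg_def vol_def)

lemma dmin_pos:
  assumes "wgraph V w" "no_self_loops w" "2 \<le> card V" "0 < conductance V w"
  shows "0 < dmin V w"
proof -
  have fin: "finite V" and "V \<noteq> {}"
    using assms(1,3) by (auto simp: wgraph_def)
  then have "dmin V w \<in> degree V w ` V"
    unfolding dmin_def by (intro Min_in) auto
  then obtain u where u: "u \<in> V" "dmin V w = degree V w u"
    by auto
  have "{u} \<noteq> V"
    using assms(3) by auto
  then have "{u} \<subset> V"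
    using u(1) by auto
  moreover have "vol V w {u} \<le> vol V w V / 2"
    using degree_le_half_vol[OF assms(1,2) u(1)] by (simp add: vol_def)
  ultimately have "0 < vol V w {u}"
    using conductance_mult_vol_le_cut_weight(1)[OF assms(1,4)] by blast
  then show ?thesis
    using u(2) by (simp add: vol_def)
qed

lemma hc_cost_le_davg_dmin_ratio_mult_hc_opt:
  assumes "wgraph V w" "no_self_loops w" "2 \<le> card V" "0 < conductance V w" "hc_tree V T"
  shows "hc_cost V w T \<le> 9 / (4 * conductance V w) * (davg V w / dmin V w) * hc_opt V w"
proof -
  define n \<Phi> where "n = real (card V)" and "\<Phi> = conductance V w"
  have fin: "finite V" and pos: "0 < n" "0 < \<Phi>" "0 < dmin V w"
    using assms(1,3,4) dmin_pos[OF assms(1-4)] by (auto simp: wgraph_def n_def \<Phi>_def)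
  have opt: "2/9 * \<Phi> * dmin V w * n^2 \<le> hc_opt V w"
    using hc_cost_ge_dmin_bound[OF assms(1,4) _ assms(3)] dmin_le_degree[OF fin] pos(3)
    unfolding n_def \<Phi>_def by (intro hc_opt_greatest[OF assms(5)]) simp
  have "hc_cost V w T \<le> n * vol V w V / 2"
    using hc_cost_le_card_mult_vol[OF assms(1,5)] by (simp add: n_def)
  also have "\<dots> = 9 / (4 * \<Phi>) * (davg V w / dmin V w) * (2/9 * \<Phi> * dmin V w * n^2)"
    using pos by (simp add: davg_def vol_def n_def field_simps power2_eq_square)
  also have "\<dots> \<le> 9 / (4 * \<Phi>) * (davg V w / dmin V w) * hc_opt V w"
    using opt pos davg_nonneg[OF assms(1)] by (intro mult_left_mono) simp_all
  finally show ?thesis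
    unfolding \<Phi>_def .
qed

lemma hc_cost_le_dmax_davg_ratio_mult_hc_opt:
  assumes "wgraph V w" "no_self_loops w" "2 \<le> card V" "0 < conductance V w" "hc_tree V T"
  shows "hc_cost V w T \<le> 9 / (4 * conductance V w) * (dmax V w / davg V w) * hc_opt V w"
proof -
  define n D \<Phi> where "n = real (card V)" and "D = vol V w V" and "\<Phi> = conductance V w"
  have fin: "finite V" and "0 < n" "0 < \<Phi>"
    using assms(1,3,4) by (auto simp: wgraph_def n_def \<Phi>_def)
  obtain u where u: "u \<in> V"
    using assms(3) by fastforce
  have "0 < dmax V w"
    using dmin_pos[OF assms(1-4)] dmin_le_degree[OF fin u, of w] degree_le_dmax[OF fin u, of w] by linarith
  have "0 < D"
    using card_mult_dmin_le_vol[OF fin, of w] mult_pos_pos[OF \<open>0 < n\<close> dmin_pos[OF assms(1-4)]]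
    unfolding n_def D_def by linarith
  have opt: "2/9 * \<Phi> * D^2 / dmax V w \<le> hc_opt V w"
    using hc_cost_ge_dmax_bound[OF assms(1,2,4) _ _ \<open>0 < dmax V w\<close>] degree_le_dmax[OF fin] \<open>0 < D\<close>
    unfolding D_def \<Phi>_def by (intro hc_opt_greatest[OF assms(5)]) simp
  have "hc_cost V w T \<le> n * D / 2"
    using hc_cost_le_card_mult_vol[OF assms(1,5)] by (simp add: n_def D_def)
  also have "\<dots> = 9 / (4 * \<Phi>) * (dmax V w / davg V w) * (2/9 * \<Phi> * D^2 / dmax V w)"
    using \<open>0 < n\<close> \<open>0 < \<Phi>\<close> \<open>0 < D\<close> \<open>0 < dmax V w\<close>
    by (simp add: davg_def D_def vol_def n_def field_simps power2_eq_square)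
  also have "\<dots> \<le> 9 / (4 * \<Phi>) * (dmax V w / davg V w) * hc_opt V w"
    using opt \<open>0 < \<Phi>\<close> \<open>0 < dmax V w\<close> davg_nonneg[OF assms(1)] by (intro mult_left_mono) simp_all
  finally show ?thesis
    unfolding \<Phi>_def .
qed

theorem lemma3p1:
  fixes V :: "'a set" and w :: "'a \<Rightarrow> 'a \<Rightarrow> real" and T :: "'a bintree"
  assumes "wgraph V w" and "no_self_loops w" and "card V \<ge> 2"
    and "conductance V w > 0"
    and "hc_tree V T"
  shows "hc_cost V w T \<le> 9 / (4 * conductance V w)
           * min (davg V w / dmin V w) (dmax V w / davg V w) * hc_opt V w"
proof (cases "davg V w / dmin V w \<le> dmax V w / davg V w")
  case True
  with hc_cost_le_davg_dmin_ratio_mult_hc_opt[OF assms] show ?thesis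
    by (simp only: min_def if_True)
next
  case False
  with hc_cost_le_dmax_davg_ratio_mult_hc_opt[OF assms] show ?thesis
    by (simp only: min_def if_False)
qed

end
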